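(* Let $G$ be a finite group, and let $H$ be a normal subgroup of $G$ such that $G/H$ is cyclic. Let $K$ be a subgroup with $H\le K\le G$. Then the $G$-conjugacy classes contained in $K$ whose centralizing subgroup (with respect to $H$) is $K$ are equally distributed between the cosets of $H$ in $K$; that is, for any two cosets $Hx, Hy$ of $H$ contained in $K$, the number of $G$-conjugacy classes contained in $Hx$ with centralizing subgroup $K$ equals the number of $G$-conjugacy classes contained in $Hy$ with centralizing subgroup $K$.
   Context: For $g\in G$, the centralizing subgroup of $g$ with respect to $H$ is $\Delta_g = HC_G(g)$, the subgroup generated by $H$ and the centralizer $C_G(g)$. For a conjugacy class $X$ of $G$, its centralizing subgroup is $\Delta_X=\Delta_g$ for any $g\in X$ (this is independent of the choice of $g$). Since $G/H$ is abelian, each $G$-conjugacy class lies in a single coset of $H$. *)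

theory Defs
  imports "HOL-Algebra.Algebra"
begin

definition centralizer_elt :: "('a, 'b) monoid_scheme \<Rightarrow> 'a \<Rightarrow> 'a set" where
  "centralizer_elt G g = {c \<in> carrier G. c \<otimes>\<^bsub>G\<^esub> g = g \<otimes>\<^bsub>G\<^esub> c}"

definition conj_class :: "('a, 'b) monoid_scheme \<Rightarrow> 'a \<Rightarrow> 'a set" where
  "conj_class G g = {h \<otimes>\<^bsub>G\<^esub> g \<otimes>\<^bsub>G\<^esub> inv\<^bsub>G\<^esub> h | h. h \<in> carrier G}"

definition conj_classes :: "('a, 'b) monoid_scheme \<Rightarrow> 'a set set" where
  "conj_classes G = conj_class G ` carrier G"

definition centralizing_subgroup :: "('a, 'b) monoid_scheme \<Rightarrow> 'a set \<Rightarrow> 'a \<Rightarrow> 'a set" where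
  "centralizing_subgroup G H g = generate G (H \<union> centralizer_elt G g)"

text \<open>Centralizing subgroup of a conjugacy class X: that of any representative (well defined
  when H is normal; we pick one with SOME).\<close>
definition centralizing_subgroup_class :: "('a, 'b) monoid_scheme \<Rightarrow> 'a set \<Rightarrow> 'a set \<Rightarrow> 'a set" where
  "centralizing_subgroup_class G H C = centralizing_subgroup G H (SOME g. g \<in> C)"

end

theory Submission
  imports Defs
begin

text \<open>
  Write \<open>C(g)\<close> for the centralizer of \<open>g\<close> and \<open>D(g) = H C(g)\<close>. A coset \<open>Hm\<close> meets \<open>C(g)\<close>
  in exactly \<open>|H \<inter> C(g)|\<close> elements if \<open>m \<in> D(g)\<close> and not at all otherwise, so
  \<open>|H \<inter> C(g)| |D(g)| = |H| |C(g)|\<close>. With the orbit-stabilizer theorem, every class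
  \<open>X \<subseteq> Hx\<close> with \<open>D(X) = K\<close> contributes \<open>|H| |G| / |K|\<close> to the weight
  \<open>w(x, K) = \<Sum>{|H \<inter> C(g)| | g \<in> Hx, D(g) = K}\<close>, so it suffices to show that \<open>w(x, K)\<close>
  does not depend on the coset \<open>Hx \<subseteq> K\<close>.

  Since \<open>K/H\<close> is cyclic, generated by \<open>Hl\<close> say, \<open>K \<subseteq> D(g)\<close> holds iff \<open>C(g)\<close> meets \<open>Hl\<close>.
  Hence \<open>\<Sum>{|H \<inter> C(g)| | g \<in> Hx, K \<subseteq> D(g)}\<close> counts the commuting pairs in \<open>Hx \<times> Hl\<close>,
  and counting them from the other side shows that it equals \<open>\<Sum>{|H \<inter> C(b)| | b \<in> Hl}\<close>,
  independently of \<open>x\<close>. These sums are the sums of \<open>w(x, M)\<close> over all \<open>M \<supseteq> K\<close>, so a downward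
  induction over \<open>K\<close> (Moebius inversion) proves that each \<open>w(x, K)\<close> is independent of \<open>x\<close>.
\<close>

context group
begin

lemma inv_mult_cancel_left [simp]: "x \<in> carrier G \<Longrightarrow> y \<in> carrier G \<Longrightarrow> inv x \<otimes> (x \<otimes> y) = y"
  by (simp flip: m_assoc)

lemma mult_inv_cancel_left [simp]: "x \<in> carrier G \<Longrightarrow> y \<in> carrier G \<Longrightarrow> x \<otimes> (inv x \<otimes> y) = y"
  by (simp flip: m_assoc)

lemma centralizer_elt_subgroup:
  assumes "g \<in> carrier G"
  shows "subgroup (centralizer_elt G g) G"
proof (rule subgroupI)
  show "centralizer_elt G g \<subseteq> carrier G" "centralizer_elt G g \<noteq> {}"
    using assms unfolding centralizer_elt_def by force+
next
  fix c assume "c \<in> centralizer_elt G g"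
  then have c: "c \<in> carrier G" "c \<otimes> g = g \<otimes> c" unfolding centralizer_elt_def by auto
  have "inv c \<otimes> g = inv c \<otimes> (g \<otimes> c) \<otimes> inv c" using c assms by (simp add: m_assoc)
  also have "\<dots> = g \<otimes> inv c" using c assms by (simp add: m_assoc flip: c(2))
  finally show "inv c \<in> centralizer_elt G g" using c unfolding centralizer_elt_def by simp
  fix d assume "d \<in> centralizer_elt G g"
  then have d: "d \<in> carrier G" "d \<otimes> g = g \<otimes> d" unfolding centralizer_elt_def by auto
  have "c \<otimes> d \<otimes> g = g \<otimes> (c \<otimes> d)" using c d assms by (metis m_assoc)
  then show "c \<otimes> d \<in> centralizer_elt G g" using c d unfolding centralizer_elt_def by simp
qed

lemma conj_mem_centralizer_elt:
  assumes a: "a \<in> carrier G" and g: "g \<in> carrier G" and c: "c \<in> centralizer_elt G g"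
  shows "a \<otimes> c \<otimes> inv a \<in> centralizer_elt G (a \<otimes> g \<otimes> inv a)"
proof -
  from c have c': "c \<in> carrier G" "c \<otimes> g = g \<otimes> c" unfolding centralizer_elt_def by auto
  have "(a \<otimes> c \<otimes> inv a) \<otimes> (a \<otimes> g \<otimes> inv a) = a \<otimes> (c \<otimes> g) \<otimes> inv a"
    using a g c'(1) by (simp add: m_assoc)
  also have "\<dots> = a \<otimes> (g \<otimes> c) \<otimes> inv a" using c' by simp
  also have "\<dots> = (a \<otimes> g \<otimes> inv a) \<otimes> (a \<otimes> c \<otimes> inv a)"
    using a g c'(1) by (simp add: m_assoc)
  finally show ?thesis using a c' unfolding centralizer_elt_def by simp
qed

lemma conj_class_self: "g \<in> carrier G \<Longrightarrow> g \<in> conj_class G g"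
  unfolding conj_class_def by (auto intro!: exI[of _ \<one>])

lemma conj_class_subset_carrier: "g \<in> carrier G \<Longrightarrow> conj_class G g \<subseteq> carrier G"
  unfolding conj_class_def by auto

lemma conj_class_eq:
  assumes g: "g \<in> carrier G" and g': "g' \<in> conj_class G g"
  shows "conj_class G g' = conj_class G g"
proof -
  obtain c where c: "c \<in> carrier G" and g'_eq: "g' = c \<otimes> g \<otimes> inv c"
    using g' unfolding conj_class_def by auto
  have conj_comp: "a \<otimes> g' \<otimes> inv a = (a \<otimes> c) \<otimes> g \<otimes> inv (a \<otimes> c)" if "a \<in> carrier G" for a
    using that c g by (simp add: g'_eq m_assoc inv_mult_group)
  show ?thesis
  proof (intro equalityI subsetI)
    fix w assume "w \<in> conj_class G g'"
    then obtain a where "a \<in> carrier G" "w = a \<otimes> g' \<otimes> inv a" unfolding conj_class_def by auto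
    then show "w \<in> conj_class G g"
      unfolding conj_class_def using c conj_comp by (auto intro!: exI[of _ "a \<otimes> c"])
  next
    fix w assume "w \<in> conj_class G g"
    then obtain a where a: "a \<in> carrier G" "w = a \<otimes> g \<otimes> inv a" unfolding conj_class_def by auto
    then have "w = (a \<otimes> inv c) \<otimes> g' \<otimes> inv (a \<otimes> inv c)"
      using c conj_comp[of "a \<otimes> inv c"] by (simp add: m_assoc)
    then show "w \<in> conj_class G g'"
      unfolding conj_class_def using a c by blast
  qed
qed

lemma card_conj_class_mult_card_centralizer:
  assumes g: "g \<in> carrier G"
  shows "card (conj_class G g) * card (centralizer_elt G g) = order G"
proof -
  interpret conj: group_action G "carrier G" "\<lambda>a. \<lambda>h\<in>carrier G. a \<otimes> h \<otimes> inv a"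
    by (rule action_by_conjugation)
  have "a \<otimes> g \<otimes> inv a = g \<longleftrightarrow> a \<otimes> g = g \<otimes> a" if "a \<in> carrier G" for a
    using that g by (metis inv_solve_right m_closed)
  then have "stabilizer G (\<lambda>a. \<lambda>h\<in>carrier G. a \<otimes> h \<otimes> inv a) g = centralizer_elt G g"
    unfolding stabilizer_def centralizer_elt_def using g by auto
  moreover have "orbit G (\<lambda>a. \<lambda>h\<in>carrier G. a \<otimes> h \<otimes> inv a) g = conj_class G g"
    unfolding orbit_def conj_class_def using g by auto
  ultimately show ?thesis using conj.orbit_stabilizer_theorem[OF g] by simp
qed

lemma conj_classes_disjoint:
  assumes A: "A \<in> conj_classes G" and B: "B \<in> conj_classes G" and "A \<noteq> B"
  shows "A \<inter> B = {}"
proof -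
  have class_of_mem: "conj_class G w = C" if C: "C \<in> conj_classes G" and w: "w \<in> C" for C w
  proof -
    obtain c where c: "c \<in> carrier G" "C = conj_class G c"
      using C unfolding conj_classes_def by auto
    with w have "w \<in> conj_class G c" by simp
    from conj_class_eq[OF c(1) this] c(2) show ?thesis by simp
  qed
  show ?thesis
  proof (rule ccontr)
    assume "A \<inter> B \<noteq> {}"
    then obtain w where "w \<in> A" "w \<in> B" by blast
    from class_of_mem[OF A this(1)] class_of_mem[OF B this(2)] have "A = B" by simp
    with \<open>A \<noteq> B\<close> show False ..
  qed
qed

lemma sum_card_centralizer_elt_Int_swap:
  assumes "finite A" "finite B" "A \<subseteq> carrier G" "B \<subseteq> carrier G"
  shows "(\<Sum>a\<in>A. card (centralizer_elt G a \<inter> B)) = (\<Sum>b\<in>B. card (centralizer_elt G b \<inter> A))"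
proof -
  have card_eq: "card (centralizer_elt G a \<inter> Y) = (\<Sum>y\<in>Y. if y \<otimes> a = a \<otimes> y then 1 else 0)"
    if "finite Y" "Y \<subseteq> carrier G" for a Y
    using that by (intro card_as_sums) (auto simp: centralizer_elt_def)
  show ?thesis
    using assms by (simp add: card_eq sum.swap[of _ A B] eq_commute)
qed

lemma sum_card_centralizer_elt_conj_class:
  assumes fin: "finite (carrier G)" and g: "g \<in> carrier G"
  shows "(\<Sum>g'\<in>conj_class G g. card (centralizer_elt G g')) = order G"
proof -
  have "card (centralizer_elt G g') = card (centralizer_elt G g)" if "g' \<in> conj_class G g" for g'
  proof -
    have g': "g' \<in> carrier G" using that conj_class_subset_carrier[OF g] by auto
    have "card (conj_class G g) > 0"
      using conj_class_self[OF g] conj_class_subset_carrier[OF g] fin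
      by (auto simp: card_gt_0_iff intro: finite_subset)
    then show ?thesis
      using card_conj_class_mult_card_centralizer[OF g] card_conj_class_mult_card_centralizer[OF g']
      by (metis conj_class_eq[OF g that] nat_mult_eq_cancel1)
  qed
  then have "(\<Sum>g'\<in>conj_class G g. card (centralizer_elt G g'))
           = card (conj_class G g) * card (centralizer_elt G g)"
    by simp
  then show ?thesis using card_conj_class_mult_card_centralizer[OF g] by simp
qed

end

context normal
begin

lemma centralizing_subgroup_subgroup: "subgroup (centralizing_subgroup G H g) G"
  unfolding centralizing_subgroup_def centralizer_elt_def
  using subset by (intro generate_is_subgroup) auto

lemma subset_centralizing_subgroup: "H \<subseteq> centralizing_subgroup G H g"
  unfolding centralizing_subgroup_def by (auto intro: generate.incl)

lemma centralizing_subgroup_eq_UN_rcos: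
  assumes g: "g \<in> carrier G"
  shows "centralizing_subgroup G H g = (\<Union>c\<in>centralizer_elt G g. H #> c)"
proof -
  interpret second_isomorphism_grp H G "centralizer_elt G g"
    by intro_locales (simp add: second_isomorphism_grp_axioms_def centralizer_elt_subgroup g)
  have "H <#> centralizer_elt G g = generate G (H \<union> centralizer_elt G g)"
  proof (rule generateI)
    show "H \<union> centralizer_elt G g \<subseteq> H <#> centralizer_elt G g"
      using H_contained_in_set_mult S_contained_in_set_mult by blast
    show "H <#> centralizer_elt G g \<subseteq> M"
      if "subgroup M G" "H \<union> centralizer_elt G g \<subseteq> M" for M
      using that unfolding set_mult_def by (auto intro: subgroup.m_closed[OF that(1)])
  qed (rule normal_set_mult_subgroup)
  moreover have "H <#> centralizer_elt G g = (\<Union>c\<in>centralizer_elt G g. H #> c)"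
    unfolding set_mult_def r_coset_def by blast
  ultimately show ?thesis unfolding centralizing_subgroup_def by simp
qed

lemma rcos_mem_sym:
  assumes "m \<in> carrier G" and "z \<in> carrier G"
  shows "z \<in> H #> m \<longleftrightarrow> m \<in> H #> z"
  using assms repr_independence[OF _ _ is_subgroup] rcos_self[OF _ is_subgroup] by blast

lemma mem_centralizing_subgroup_iff:
  assumes g: "g \<in> carrier G" and m: "m \<in> carrier G"
  shows "m \<in> centralizing_subgroup G H g \<longleftrightarrow> centralizer_elt G g \<inter> (H #> m) \<noteq> {}"
proof -
  have "m \<in> H #> c \<longleftrightarrow> c \<in> H #> m" if "c \<in> centralizer_elt G g" for c
    using that m rcos_mem_sym unfolding centralizer_elt_def by blast
  then show ?thesis unfolding centralizing_subgroup_eq_UN_rcos[OF g] by blast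
qed

lemma centralizer_elt_subset_centralizing_subgroup:
  "g \<in> carrier G \<Longrightarrow> centralizer_elt G g \<subseteq> centralizing_subgroup G H g"
  unfolding centralizing_subgroup_eq_UN_rcos
  using rcos_self is_subgroup by (auto simp: centralizer_elt_def)

lemma card_centralizer_elt_Int_rcos:
  assumes g: "g \<in> carrier G" and m: "m \<in> centralizing_subgroup G H g"
  shows "card (centralizer_elt G g \<inter> (H #> m)) = card (H \<inter> centralizer_elt G g)"
proof -
  interpret C: subgroup "centralizer_elt G g" G by (rule centralizer_elt_subgroup[OF g])
  obtain c where c: "c \<in> centralizer_elt G g" "m \<in> H #> c"
    using m unfolding centralizing_subgroup_eq_UN_rcos[OF g] by blast
  have "H #> m = H #> c" using c by (simp add: repr_independence is_subgroup)
  moreover have "centralizer_elt G g \<inter> (H #> c) = (H \<inter> centralizer_elt G g) #> c"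
  proof -
    have "h \<otimes> c \<in> centralizer_elt G g \<longleftrightarrow> h \<in> centralizer_elt G g" if "h \<in> H" for h
      using that c(1) subset
      by (metis C.m_closed C.m_inv_closed C.mem_carrier inv_solve_right subsetD)
    then show ?thesis unfolding r_coset_def by blast
  qed
  moreover have "(H \<inter> centralizer_elt G g) #> c \<in> rcosets (H \<inter> centralizer_elt G g)"
    using c(1) by (intro rcosetsI) auto
  moreover have "card (H \<inter> centralizer_elt G g) = card ((H \<inter> centralizer_elt G g) #> c)"
    using calculation(3) C.subset by (intro card_rcosets_equal) auto
  ultimately show ?thesis by simp
qed

lemma rcos_subset_centralizing_subgroup:
  "z \<in> centralizing_subgroup G H g \<Longrightarrow> H #> z \<subseteq> centralizing_subgroup G H g"
  using subset_centralizing_subgroup unfolding r_coset_def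
  by (auto intro: subgroup.m_closed[OF centralizing_subgroup_subgroup])

lemma swap_Sigma_centralizer_elt_Int_rcos:
  assumes g: "g \<in> carrier G"
  shows "prod.swap ` Sigma (centralizing_subgroup G H g) (\<lambda>m. centralizer_elt G g \<inter> (H #> m))
       = Sigma (centralizer_elt G g) (\<lambda>z. H #> z)"
proof (intro equalityI subsetI)
  let ?C = "centralizer_elt G g" and ?D = "centralizing_subgroup G H g"
  have D: "?D \<subseteq> carrier G" by (rule subgroup.subset[OF centralizing_subgroup_subgroup])
  have C: "?C \<subseteq> ?D" by (rule centralizer_elt_subset_centralizing_subgroup[OF g])
  {
    fix p assume "p \<in> prod.swap ` Sigma ?D (\<lambda>m. ?C \<inter> (H #> m))"
    then obtain m z where "p = (z, m)" "m \<in> ?D" "z \<in> ?C" "z \<in> H #> m" by auto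
    then show "p \<in> Sigma ?C (\<lambda>z. H #> z)"
      using rcos_mem_sym[of m z] C D by auto
  next
    fix p assume "p \<in> Sigma ?C (\<lambda>z. H #> z)"
    then obtain m z where p: "p = (z, m)" "z \<in> ?C" "m \<in> H #> z" by auto
    then have "m \<in> ?D" using C rcos_subset_centralizing_subgroup by blast
    with p have "(m, z) \<in> Sigma ?D (\<lambda>m. ?C \<inter> (H #> m))"
      using rcos_mem_sym[of m z] C D by auto
    with p show "p \<in> prod.swap ` Sigma ?D (\<lambda>m. ?C \<inter> (H #> m))" by force
  }
qed

text \<open>Count the pairs \<open>(m, z)\<close> with \<open>m \<in> H C(g)\<close> and \<open>z \<in> C(g) \<inter> Hm\<close> in two ways.\<close>

lemma card_Int_centralizer_elt_mult_card_centralizing_subgroup: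
  assumes fin: "finite (carrier G)" and g: "g \<in> carrier G"
  shows "card (H \<inter> centralizer_elt G g) * card (centralizing_subgroup G H g)
       = card H * card (centralizer_elt G g)"
proof -
  let ?C = "centralizer_elt G g" and ?D = "centralizing_subgroup G H g"
  have D: "?D \<subseteq> carrier G" by (rule subgroup.subset[OF centralizing_subgroup_subgroup])
  have C: "?C \<subseteq> ?D" by (rule centralizer_elt_subset_centralizing_subgroup[OF g])
  have fin_D: "finite ?D" and fin_C: "finite ?C"
    using fin D C by (auto intro: finite_subset)
  have "card (Sigma ?D (\<lambda>m. ?C \<inter> (H #> m))) = (\<Sum>m\<in>?D. card (?C \<inter> (H #> m)))"
    using fin_D fin_C by (intro card_SigmaI) auto
  also have "\<dots> = card ?D * card (H \<inter> ?C)"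
    by (simp add: card_centralizer_elt_Int_rcos[OF g])
  finally have "card ?D * card (H \<inter> ?C) = card (Sigma ?C (\<lambda>z. H #> z))"
    using swap_Sigma_centralizer_elt_Int_rcos[OF g] by (metis card_image inj_swap)
  also have "\<dots> = (\<Sum>z\<in>?C. card (H #> z))"
    using fin_C fin_D C rcos_subset_centralizing_subgroup[of _ g]
    by (intro card_SigmaI) (auto intro: finite_subset)
  also have "\<dots> = card ?C * card H"
    using C D subset by (simp add: card_rcosets_equal[OF rcosetsI, symmetric] subset_iff)
  finally show ?thesis by (simp add: mult.commute)
qed

lemma subset_centralizing_subgroup_iff_generator:
  assumes K: "subgroup K G" and l: "l \<in> K" and gen: "\<And>x. x \<in> K \<Longrightarrow> \<exists>q::int. x \<in> H #> l [^] q"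
  shows "K \<subseteq> centralizing_subgroup G H g \<longleftrightarrow> l \<in> centralizing_subgroup G H g"
proof
  assume l_D: "l \<in> centralizing_subgroup G H g"
  interpret D: subgroup "centralizing_subgroup G H g" G by (rule centralizing_subgroup_subgroup)
  show "K \<subseteq> centralizing_subgroup G H g"
  proof
    fix x assume "x \<in> K"
    then obtain q :: int where "x \<in> H #> l [^] q" using gen by blast
    moreover have "l [^] q \<in> centralizing_subgroup G H g"
      using subgroup_int_pow_closed[OF D.subgroup_axioms l_D] .
    ultimately show "x \<in> centralizing_subgroup G H g"
      using subset_centralizing_subgroup unfolding r_coset_def by auto
  qed
qed (use l in blast)

end

locale abelian_factor_group = normal +
  assumes factor_comm_group: "comm_group (G Mod H)"
begin

lemma conj_mem_rcos:
  assumes a: "a \<in> carrier G" and g: "g \<in> carrier G"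
  shows "a \<otimes> g \<otimes> inv a \<in> H #> g"
proof -
  interpret Q: comm_group "G Mod H" by (rule factor_comm_group)
  have "(H #> a) <#> (H #> g) = (H #> g) <#> (H #> a)"
    using Q.m_comm a g subset by (simp add: FactGroup_def rcosetsI)
  then have "H #> (a \<otimes> g \<otimes> inv a) = H #> (g \<otimes> a \<otimes> inv a)"
    using a g by (simp add: rcos_sum flip: rcos_sum)
  moreover have "a \<otimes> g \<otimes> inv a \<in> H #> (a \<otimes> g \<otimes> inv a)"
    using a g by (simp add: rcos_self is_subgroup)
  ultimately show ?thesis using a g by (simp add: m_assoc)
qed

lemma conj_class_subset_rcos_iff:
  assumes g: "g \<in> carrier G" and x: "x \<in> carrier G"
  shows "conj_class G g \<subseteq> H #> x \<longleftrightarrow> g \<in> H #> x"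
proof
  assume "g \<in> H #> x"
  then have "H #> x = H #> g" by (rule repr_independence[OF _ x is_subgroup])
  then show "conj_class G g \<subseteq> H #> x"
    unfolding conj_class_def using g conj_mem_rcos by auto
qed (use conj_class_self[OF g] in auto)

lemma centralizing_subgroup_subset_conj:
  assumes a: "a \<in> carrier G" and g: "g \<in> carrier G"
  shows "centralizing_subgroup G H g \<subseteq> centralizing_subgroup G H (a \<otimes> g \<otimes> inv a)"
proof
  fix m assume "m \<in> centralizing_subgroup G H g"
  then obtain c where c: "c \<in> centralizer_elt G g" "m \<in> H #> c"
    unfolding centralizing_subgroup_eq_UN_rcos[OF g] by blast
  then have "c \<in> carrier G" unfolding centralizer_elt_def by simp
  then have "H #> c = H #> (a \<otimes> c \<otimes> inv a)"
    using a conj_mem_rcos by (simp add: repr_independence is_subgroup)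
  then show "m \<in> centralizing_subgroup G H (a \<otimes> g \<otimes> inv a)"
    unfolding centralizing_subgroup_eq_UN_rcos[OF m_closed[OF m_closed[OF a g] inv_closed[OF a]]]
    using c conj_mem_centralizer_elt[OF a g c(1)] by auto
qed

lemma centralizing_subgroup_conj:
  assumes a: "a \<in> carrier G" and g: "g \<in> carrier G"
  shows "centralizing_subgroup G H (a \<otimes> g \<otimes> inv a) = centralizing_subgroup G H g"
proof
  have "inv a \<otimes> (a \<otimes> g \<otimes> inv a) \<otimes> inv (inv a) = g" using a g by (simp add: m_assoc)
  then show "centralizing_subgroup G H (a \<otimes> g \<otimes> inv a) \<subseteq> centralizing_subgroup G H g"
    using centralizing_subgroup_subset_conj[of "inv a" "a \<otimes> g \<otimes> inv a"] a g by simp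
qed (rule centralizing_subgroup_subset_conj[OF a g])

lemma centralizing_subgroup_of_mem_conj_class:
  assumes g: "g \<in> carrier G" and g': "g' \<in> conj_class G g"
  shows "centralizing_subgroup G H g' = centralizing_subgroup G H g"
  using g' centralizing_subgroup_conj[OF _ g] unfolding conj_class_def by auto

lemma centralizing_subgroup_class_conj_class:
  assumes g: "g \<in> carrier G"
  shows "centralizing_subgroup_class G H (conj_class G g) = centralizing_subgroup G H g"
  unfolding centralizing_subgroup_class_def
  using someI[of "\<lambda>g'. g' \<in> conj_class G g", OF conj_class_self[OF g]]
  by (rule centralizing_subgroup_of_mem_conj_class[OF g])

lemma UN_conj_classes_centralizing:
  assumes x: "x \<in> carrier G"
  shows "\<Union>{C \<in> conj_classes G. C \<subseteq> H #> x \<and> centralizing_subgroup_class G H C = K}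
       = {g \<in> H #> x. centralizing_subgroup G H g = K}"
proof (intro equalityI subsetI)
  fix g assume "g \<in> \<Union>{C \<in> conj_classes G. C \<subseteq> H #> x \<and> centralizing_subgroup_class G H C = K}"
  then obtain C where C: "C \<in> conj_classes G" "C \<subseteq> H #> x" "centralizing_subgroup_class G H C = K"
    and gC: "g \<in> C" by blast
  then obtain g0 where g0: "g0 \<in> carrier G" "C = conj_class G g0" unfolding conj_classes_def by blast
  have "centralizing_subgroup G H g = centralizing_subgroup G H g0"
    using centralizing_subgroup_of_mem_conj_class[OF g0(1)] gC g0(2) by blast
  also have "\<dots> = K" using C(3) g0 centralizing_subgroup_class_conj_class by simp
  finally show "g \<in> {g \<in> H #> x. centralizing_subgroup G H g = K}" using C(2) gC by blast
next
  fix g assume g: "g \<in> {g \<in> H #> x. centralizing_subgroup G H g = K}"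
  then have gc: "g \<in> carrier G" using r_coset_subset_G[OF subset x] by auto
  then have "conj_class G g \<in> {C \<in> conj_classes G. C \<subseteq> H #> x \<and> centralizing_subgroup_class G H C = K}"
    using g x by (auto simp: conj_classes_def conj_class_subset_rcos_iff centralizing_subgroup_class_conj_class)
  then show "g \<in> \<Union>{C \<in> conj_classes G. C \<subseteq> H #> x \<and> centralizing_subgroup_class G H C = K}"
    using conj_class_self[OF gc] by blast
qed

lemma card_centralizing_subgroup_mult_sum_conj_class:
  assumes fin: "finite (carrier G)" and g: "g \<in> carrier G"
  shows "card (centralizing_subgroup G H g) * (\<Sum>g'\<in>conj_class G g. card (H \<inter> centralizer_elt G g'))
       = card H * order G"
proof -
  have "card (centralizing_subgroup G H g) * (\<Sum>g'\<in>conj_class G g. card (H \<inter> centralizer_elt G g'))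
      = (\<Sum>g'\<in>conj_class G g. card (H \<inter> centralizer_elt G g') * card (centralizing_subgroup G H g'))"
    unfolding sum_distrib_left
    by (intro sum.cong refl) (simp add: centralizing_subgroup_of_mem_conj_class[OF g] mult.commute)
  also have "\<dots> = (\<Sum>g'\<in>conj_class G g. card H * card (centralizer_elt G g'))"
    using conj_class_subset_carrier[OF g]
    by (intro sum.cong refl card_Int_centralizer_elt_mult_card_centralizing_subgroup[OF fin]) auto
  also have "\<dots> = card H * order G"
    by (simp add: sum_distrib_left[symmetric] sum_card_centralizer_elt_conj_class[OF fin g])
  finally show ?thesis .
qed

end

lemma int_diff_closed_ex_dvd_all:
  fixes N :: "int set"
  assumes zero: "0 \<in> N" and diff: "\<And>a b. a \<in> N \<Longrightarrow> b \<in> N \<Longrightarrow> a - b \<in> N"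
  shows "\<exists>d\<in>N. \<forall>n\<in>N. d dvd n"
proof (cases "N \<subseteq> {0}")
  case True
  with zero show ?thesis by auto
next
  case False
  have neg: "- a \<in> N" if "a \<in> N" for a using diff[OF zero that] by simp
  have mult: "d * q \<in> N" if "d \<in> N" for d q
  proof (induction q rule: int_induct[where k = 0])
    case (step1 i) show ?case using diff[OF step1(2) neg[OF that]] by (simp add: distrib_left)
  next
    case (step2 i) show ?case using diff[OF step2(2) that] by (simp add: right_diff_distrib)
  qed (use zero in simp)
  from False obtain n where "n \<in> N" "n \<noteq> 0" by auto
  then have "nat \<bar>n\<bar> > 0 \<and> int (nat \<bar>n\<bar>) \<in> N" using neg by (cases "n > 0") auto
  then have ex: "\<exists>k::nat. k > 0 \<and> int k \<in> N" ..
  define k where "k = (LEAST k::nat. k > 0 \<and> int k \<in> N)"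
  have k: "k > 0" "int k \<in> N" using LeastI_ex[OF ex] unfolding k_def by auto
  have "int k dvd m" if m: "m \<in> N" for m
  proof (rule ccontr)
    have "m mod int k = m - int k * (m div int k)" by (simp add: minus_div_mult_eq_mod[symmetric] mult.commute)
    then have "m mod int k \<in> N" using diff[OF m mult[OF k(2)]] by simp
    moreover assume "\<not> int k dvd m"
    then have "0 < m mod int k" "m mod int k < int k" using k(1)
      by (auto simp: dvd_eq_mod_eq_0 order_le_neq_trans)
    ultimately show False
      using Least_le[of "\<lambda>k. k > 0 \<and> int k \<in> N" "nat (m mod int k)"] unfolding k_def[symmetric] by auto
  qed
  with k(2) show ?thesis by blast
qed

locale cyclic_factor_group = normal +
  assumes factor_cyclic: "cyclic_group (G Mod H)"

sublocale cyclic_factor_group \<subseteq> abelian_factor_group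
  by intro_locales
    (simp add: abelian_factor_group_axioms_def factor_cyclic
      group.cyclic_imp_abelian_group[OF factorgroup_is_group])

context cyclic_factor_group
begin

lemma ex_rcos_generator:
  assumes K: "subgroup K G" and HK: "H \<subseteq> K"
  obtains l where "l \<in> K" and "\<And>x. x \<in> K \<Longrightarrow> \<exists>q::int. x \<in> H #> l [^] q"
proof -
  interpret Q: group "G Mod H" by (rule factorgroup_is_group)
  obtain gen where gen: "gen \<in> carrier (G Mod H)" "carrier (G Mod H) = range (\<lambda>n::int. gen [^]\<^bsub>G Mod H\<^esub> n)"
    using factor_cyclic Q.cyclic_group by auto
  obtain g0 where g0: "g0 \<in> carrier G" "gen = H #> g0"
    using gen(1) by (auto simp: FactGroup_def RCOSETS_def)
  have hom: "group_hom G (G Mod H) (\<lambda>a. H #> a)"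
    using r_coset_hom_Mod by (simp add: group_hom_def group_hom_axioms_def is_group Q.is_group)
  have rep: "\<exists>n::int. x \<in> H #> g0 [^] n" if x: "x \<in> carrier G" for x
  proof -
    have "H #> x \<in> carrier (G Mod H)" using x subset by (simp add: FactGroup_def rcosetsI)
    then obtain n :: int where "H #> x = gen [^]\<^bsub>G Mod H\<^esub> n" using gen(2) by auto
    also have "\<dots> = H #> g0 [^] n" using group_hom.hom_int_pow[OF hom g0(1)] g0(2) by simp
    finally show ?thesis using rcos_self[OF x is_subgroup] by auto
  qed
  define N where "N = {n::int. g0 [^] n \<in> K}"
  have "0 \<in> N" unfolding N_def using subgroup.one_closed[OF K] by simp
  moreover have "a - b \<in> N" if "a \<in> N" "b \<in> N" for a b
    using that g0(1) unfolding N_def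
    by (simp add: int_pow_diff subgroup.m_closed[OF K] subgroup.m_inv_closed[OF K])
  ultimately obtain d where d: "d \<in> N" "\<forall>n\<in>N. d dvd n" using int_diff_closed_ex_dvd_all by metis
  show ?thesis
  proof
    show "g0 [^] d \<in> K" using d N_def by simp
    fix x assume xK: "x \<in> K"
    then have x: "x \<in> carrier G" using subgroup.subset[OF K] by auto
    obtain n :: int where n: "x \<in> H #> g0 [^] n" using rep[OF x] ..
    then obtain h where h: "h \<in> H" "x = h \<otimes> g0 [^] n" unfolding r_coset_def by auto
    have "g0 [^] n = inv h \<otimes> x" using h g0(1) subset by auto
    also have "\<dots> \<in> K" using xK h HK subgroup.m_closed[OF K] subgroup.m_inv_closed[OF K] by auto
    finally have "n \<in> N" by (simp add: N_def)
    then obtain q where "n = d * q" using d by (auto elim: dvdE)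
    then show "\<exists>q::int. x \<in> H #> (g0 [^] d) [^] q" using n int_pow_pow[OF g0(1)] by auto
  qed
qed

end

locale finite_cyclic_factor_group = cyclic_factor_group +
  assumes finite_carrier: "finite (carrier G)"
begin

lemma finite_rcos: "x \<in> carrier G \<Longrightarrow> finite (H #> x)"
  using r_coset_subset_G[OF subset] finite_carrier by (rule finite_subset)

lemma sum_card_Int_centralizer_elt_supset_eq_sum_rcos:
  assumes K: "subgroup K G" and l: "l \<in> K" and z: "z \<in> K"
    and gen_iff: "\<And>g. K \<subseteq> centralizing_subgroup G H g \<longleftrightarrow> l \<in> centralizing_subgroup G H g"
  shows "(\<Sum>g\<in>{g \<in> H #> z. K \<subseteq> centralizing_subgroup G H g}. card (H \<inter> centralizer_elt G g))
       = (\<Sum>b\<in>H #> l. card (H \<inter> centralizer_elt G b))"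
proof -
  have lc: "l \<in> carrier G" and zc: "z \<in> carrier G" using l z subgroup.subset[OF K] by auto
  have Hz: "H #> z \<subseteq> carrier G" and Hl: "H #> l \<subseteq> carrier G"
    using lc zc by (simp_all add: r_coset_subset_G[OF subset])
  have "(\<Sum>g\<in>{g \<in> H #> z. K \<subseteq> centralizing_subgroup G H g}. card (H \<inter> centralizer_elt G g))
      = (\<Sum>g\<in>H #> z. if l \<in> centralizing_subgroup G H g then card (H \<inter> centralizer_elt G g) else 0)"
    by (simp add: sum.inter_filter finite_rcos[OF zc] gen_iff)
  also have "\<dots> = (\<Sum>g\<in>H #> z. card (centralizer_elt G g \<inter> (H #> l)))"
    using Hz lc
    by (intro sum.cong) (auto simp: card_centralizer_elt_Int_rcos mem_centralizing_subgroup_iff)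
  also have "\<dots> = (\<Sum>b\<in>H #> l. card (centralizer_elt G b \<inter> (H #> z)))"
    using Hz Hl by (intro sum_card_centralizer_elt_Int_swap finite_rcos lc zc)
  also have "\<dots> = (\<Sum>b\<in>H #> l. card (H \<inter> centralizer_elt G b))"
  proof (intro sum.cong refl card_centralizer_elt_Int_rcos)
    fix b assume b: "b \<in> H #> l"
    then have bc: "b \<in> carrier G" using Hl by auto
    then have "b \<in> centralizer_elt G b \<inter> (H #> l)" using b by (simp add: centralizer_elt_def)
    then have "l \<in> centralizing_subgroup G H b" using bc lc by (auto simp: mem_centralizing_subgroup_iff)
    then show "z \<in> centralizing_subgroup G H b" using gen_iff z by blast
  qed (use Hl in auto)
  finally show ?thesis .
qed

lemma sum_card_Int_centralizer_elt_supset_eq: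
  assumes K: "subgroup K G" and HK: "H \<subseteq> K" and x: "x \<in> K" and y: "y \<in> K"
  shows "(\<Sum>g\<in>{g \<in> H #> x. K \<subseteq> centralizing_subgroup G H g}. card (H \<inter> centralizer_elt G g))
       = (\<Sum>g\<in>{g \<in> H #> y. K \<subseteq> centralizing_subgroup G H g}. card (H \<inter> centralizer_elt G g))"
proof -
  obtain l where l: "l \<in> K" and gen: "\<And>x. x \<in> K \<Longrightarrow> \<exists>q::int. x \<in> H #> l [^] q"
    using ex_rcos_generator[OF K HK] by blast
  show ?thesis
    using sum_card_Int_centralizer_elt_supset_eq_sum_rcos[OF K l _ subset_centralizing_subgroup_iff_generator[OF K l gen]] x y
    by simp
qed

definition centralizing_weight :: "'a \<Rightarrow> 'a set \<Rightarrow> nat" where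
  "centralizing_weight x M =
     (\<Sum>g\<in>{g \<in> H #> x. centralizing_subgroup G H g = M}. card (H \<inter> centralizer_elt G g))"

lemma centralizing_weight_eq_0:
  assumes "\<not> (subgroup M G \<and> H \<subseteq> M)"
  shows "centralizing_weight x M = 0"
proof -
  have "{g \<in> H #> x. centralizing_subgroup G H g = M} = {}"
    using assms centralizing_subgroup_subgroup subset_centralizing_subgroup by auto
  then show ?thesis unfolding centralizing_weight_def by (metis sum.empty)
qed

lemma sum_card_Int_centralizer_elt_supset_eq_sum_weight:
  assumes x: "x \<in> carrier G"
  shows "(\<Sum>g\<in>{g \<in> H #> x. K \<subseteq> centralizing_subgroup G H g}. card (H \<inter> centralizer_elt G g))
       = (\<Sum>M\<in>{M. K \<subseteq> M \<and> M \<subseteq> carrier G}. centralizing_weight x M)"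
proof -
  let ?S = "{g \<in> H #> x. K \<subseteq> centralizing_subgroup G H g}"
  let ?T = "{M. K \<subseteq> M \<and> M \<subseteq> carrier G}"
  have "centralizing_subgroup G H ` ?S \<subseteq> ?T"
    using subgroup.subset[OF centralizing_subgroup_subgroup] by auto
  moreover have "finite ?T"
    using finite_carrier by (auto intro: finite_subset[of _ "Pow (carrier G)"])
  moreover have "finite ?S" using finite_rcos[OF x] by simp
  ultimately have "(\<Sum>g\<in>?S. card (H \<inter> centralizer_elt G g))
      = (\<Sum>M\<in>?T. \<Sum>g\<in>{g \<in> ?S. centralizing_subgroup G H g = M}. card (H \<inter> centralizer_elt G g))"
    by (intro sum.group[symmetric])
  also have "\<dots> = (\<Sum>M\<in>?T. centralizing_weight x M)"
    unfolding centralizing_weight_def by (intro sum.cong refl arg_cong2[where f = sum]) auto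
  finally show ?thesis .
qed

text \<open>The sums over all \<open>M' \<supseteq> M\<close> agree for \<open>x\<close> and \<open>y\<close>, and so do the terms with
  \<open>M' \<supset> M\<close> by induction; the remaining terms \<open>M' = M\<close> must then agree as well.\<close>

lemma centralizing_weight_eq:
  assumes "M \<subseteq> carrier G" and "x \<in> M" and "y \<in> M"
  shows "centralizing_weight x M = centralizing_weight y M"
  using assms
proof (induction M arbitrary: x y rule: measure_induct_rule[where f = "\<lambda>M. card (carrier G) - card M"])
  case (less M)
  show ?case
  proof (cases "subgroup M G \<and> H \<subseteq> M")
    case False
    then show ?thesis by (simp add: centralizing_weight_eq_0)
  next
    case True
    let ?T = "{M'. M \<subseteq> M' \<and> M' \<subseteq> carrier G}"
    have fin_T: "finite ?T"
      using finite_carrier by (auto intro: finite_subset[of _ "Pow (carrier G)"])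
    have M_T: "M \<in> ?T" using less.prems by auto
    have "x \<in> carrier G" "y \<in> carrier G" using less.prems by auto
    then have "(\<Sum>M'\<in>?T. centralizing_weight x M') = (\<Sum>M'\<in>?T. centralizing_weight y M')"
      using sum_card_Int_centralizer_elt_supset_eq[of M x y] True less.prems
      by (simp flip: sum_card_Int_centralizer_elt_supset_eq_sum_weight)
    moreover have "centralizing_weight x M' = centralizing_weight y M'" if "M' \<in> ?T - {M}" for M'
    proof (rule less.IH)
      from that have "M \<subset> M'" "M' \<subseteq> carrier G" by auto
      then show "card (carrier G) - card M' < card (carrier G) - card M"
        using psubset_card_mono card_mono finite_carrier finite_subset by (metis diff_less_mono2 order_less_le_trans)
    qed (use that less.prems in auto)
    ultimately show ?thesis
      by (simp add: sum.remove[OF fin_T M_T])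
  qed
qed

lemma card_conj_classes_mult_eq_centralizing_weight:
  assumes x: "x \<in> carrier G"
  shows "card {C \<in> conj_classes G. C \<subseteq> H #> x \<and> centralizing_subgroup_class G H C = K}
           * (card H * order G)
       = card K * centralizing_weight x K"
proof -
  let ?X = "{C \<in> conj_classes G. C \<subseteq> H #> x \<and> centralizing_subgroup_class G H C = K}"
  have fin_C: "\<forall>C\<in>?X. finite C"
    using finite_carrier conj_class_subset_carrier unfolding conj_classes_def
    by (auto intro: finite_subset)
  have disj: "\<forall>A\<in>?X. \<forall>B\<in>?X. A \<noteq> B \<longrightarrow> A \<inter> B = {}"
    using conj_classes_disjoint by blast
  have "card K * centralizing_weight x K
      = card K * (\<Sum>C\<in>?X. \<Sum>g\<in>C. card (H \<inter> centralizer_elt G g))"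
    unfolding centralizing_weight_def UN_conj_classes_centralizing[OF x, symmetric]
    using sum.Union_disjoint[OF fin_C disj, of "\<lambda>g. card (H \<inter> centralizer_elt G g)"] by simp
  also have "\<dots> = (\<Sum>C\<in>?X. card K * (\<Sum>g\<in>C. card (H \<inter> centralizer_elt G g)))"
    by (rule sum_distrib_left)
  also have "\<dots> = (\<Sum>C\<in>?X. card H * order G)"
  proof (intro sum.cong refl)
    fix C assume "C \<in> ?X"
    then obtain g where g: "g \<in> carrier G" "C = conj_class G g"
      and K: "centralizing_subgroup G H g = K"
      unfolding conj_classes_def by (auto simp: centralizing_subgroup_class_conj_class)
    then show "card K * (\<Sum>g\<in>C. card (H \<inter> centralizer_elt G g)) = card H * order G"
      using card_centralizing_subgroup_mult_sum_conj_class[OF finite_carrier g(1)] by simp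
  qed
  finally show ?thesis by simp
qed

end

theorem theorem2p1:
  fixes G (structure) and H K :: "'a set"
  assumes "group G" and "finite (carrier G)"
    and "H \<lhd> G" and "cyclic_group (G Mod H)"
    and "subgroup K G" and "H \<subseteq> K"
    and "x \<in> K" and "y \<in> K"
  shows "card {C \<in> conj_classes G. C \<subseteq> H #> x \<and> centralizing_subgroup_class G H C = K}
       = card {C \<in> conj_classes G. C \<subseteq> H #> y \<and> centralizing_subgroup_class G H C = K}"
proof -
  interpret finite_cyclic_factor_group H G
    using assms
    by (simp add: finite_cyclic_factor_group_def finite_cyclic_factor_group_axioms_def
        cyclic_factor_group_def cyclic_factor_group_axioms_def)
  have K: "K \<subseteq> carrier G" using assms(5) subgroup.subset by blast
  have "H \<noteq> {}" using subgroup.one_closed[OF is_subgroup] by blast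
  then have pos: "card H * order G > 0"
    using finite_subset[OF subset finite_carrier] finite_carrier
    by (auto simp: card_gt_0_iff order_gt_0_iff_finite)
  have "centralizing_weight x K = centralizing_weight y K"
    using centralizing_weight_eq[OF K] assms(7,8) .
  then have "card {C \<in> conj_classes G. C \<subseteq> H #> x \<and> centralizing_subgroup_class G H C = K} * (card H * order G)
      = card {C \<in> conj_classes G. C \<subseteq> H #> y \<and> centralizing_subgroup_class G H C = K} * (card H * order G)"
    using card_conj_classes_mult_eq_centralizing_weight K assms(7,8) by (simp add: subset_iff)
  with pos show ?thesis by simp
qed

end
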